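(* In the setting of the context, for every integer $m\ge2$ the inclusion $\Gamma(G_{m-1},S_{m-1})\hookrightarrow\Gamma(G_m,S_m)$ of Cayley graphs is an isometric embedding.
   Context: $H$ is a finitely presented group with finite generating set $T$, containing a free subgroup $F$ of rank $p$ with free basis $\{d_1,\dots,d_p\}\subset T$ (standing assumption: $\mathrm{Dist}_F^H$ admits an exponentially bounded sequence of palindromic certificates in $F$). $F_x,F_y,F_z$ are free of rank $p$ with bases $R_x=\{x_i\},R_y=\{y_i\},R_z=\{z_i\}$. $G_1=[H\ast_{\langle d_i=x_iy_i^{-1}\rangle}(F_x\times F_y\times F_z)]\times\langle s_1\rangle$; $a_i=x_iz_i$, $b_i=y_iz_i$, $R_{xz}=\{a_i\}$, $R_{yz}=\{b_i\}$; $G_2=\langle G_1,s_2\mid s_2^{-1}a_is_2=b_i,\ 1\le i\le p\rangle$; $G_m=\langle G_{m-1},s_m\mid s_m^{-1}s_1s_m=s_{m-1}\rangle$ for $m\ge3$. Generating sets: $S_1=T\cup R_x\cup R_y\cup R_z\cup R_{xz}\cup R_{yz}\cup\{s_1\}$ and $S_m=S_{m-1}\cup\{s_m\}$ for $m\ge2$. *)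

theory Defs
  imports Main
begin

text \<open>A word over an alphabet 'a is a list of letters (a, e); e = False means the
generator a, e = True means its inverse.\<close>

type_synonym 'a word = "('a \<times> bool) list"

definition letters :: "'a word \<Rightarrow> 'a set" where
  "letters w = fst ` set w"

definition inv_word :: "'a word \<Rightarrow> 'a word" where
  "inv_word w = rev (map (\<lambda>(a, e). (a, \<not> e)) w)"

definition pres_step :: "'a word set \<Rightarrow> 'a word \<Rightarrow> 'a word \<Rightarrow> bool" where
  "pres_step R u v \<longleftrightarrow>
     (\<exists>p q a e. u = p @ [(a, e), (a, \<not> e)] @ q \<and> v = p @ q) \<or>
     (\<exists>p q r. r \<in> R \<and> u = p @ r @ q \<and> v = p @ q)"

definition word_eq :: "'a word set \<Rightarrow> 'a word \<Rightarrow> 'a word \<Rightarrow> bool" where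
  "word_eq R = (\<lambda>u v. pres_step R u v \<or> pres_step R v u)\<^sup>*\<^sup>*"

text \<open>Distance in the Cayley graph Gamma(G, S) between the elements represented by the
words u and v: the word length over S of u^-1 v.\<close>

definition word_dist :: "'a set \<Rightarrow> 'a word set \<Rightarrow> 'a word \<Rightarrow> 'a word \<Rightarrow> nat" where
  "word_dist S R u v =
     (LEAST n. \<exists>w. letters w \<subseteq> S \<and> length w = n \<and> word_eq R w (inv_word u @ v))"

definition freely_reduced :: "'a word \<Rightarrow> bool" where
  "freely_reduced w \<longleftrightarrow>
     (\<forall>i. Suc i < length w \<longrightarrow> \<not> (fst (w ! i) = fst (w ! Suc i) \<and> snd (w ! i) \<noteq> snd (w ! Suc i)))"

definition free_basis :: "'t word set \<Rightarrow> nat \<Rightarrow> (nat \<Rightarrow> 't) \<Rightarrow> bool" where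
  "free_basis RH p d \<longleftrightarrow>
     (\<forall>w :: nat word. w \<noteq> [] \<longrightarrow> freely_reduced w \<longrightarrow> letters w \<subseteq> {..<p} \<longrightarrow>
        \<not> word_eq RH (map (\<lambda>(i, e). (d i, e)) w) [])"

text \<open>Generator labels: Tg t for t in T, Xg i = x_i, Yg i = y_i, Zg i = z_i,
Ag i = a_i, Bg i = b_i (indices i < p), Sg k = s_k (k \<ge> 1).\<close>

datatype 't gen = Tg 't | Xg nat | Yg nat | Zg nat | Ag nat | Bg nat | Sg nat

definition pos :: "'a \<Rightarrow> 'a \<times> bool" where "pos a = (a, False)"
definition ngt :: "'a \<Rightarrow> 'a \<times> bool" where "ngt a = (a, True)"

definition comm :: "'a \<Rightarrow> 'a \<Rightarrow> 'a word" where
  "comm a b = [pos a, pos b, ngt a, ngt b]"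

text \<open>Generators of the amalgamated product H *_F (F_x \<times> F_y \<times> F_z), together with a_i, b_i.\<close>

definition gens0 :: "'t set \<Rightarrow> nat \<Rightarrow> 't gen set" where
  "gens0 T p = Tg ` T \<union> Xg ` {..<p} \<union> Yg ` {..<p} \<union> Zg ` {..<p} \<union> Ag ` {..<p} \<union> Bg ` {..<p}"

fun gensG :: "'t set \<Rightarrow> nat \<Rightarrow> nat \<Rightarrow> 't gen set" where
  "gensG T p 0 = gens0 T p"
| "gensG T p (Suc 0) = gens0 T p \<union> {Sg 1}"
| "gensG T p (Suc (Suc k)) = gensG T p (Suc k) \<union> {Sg (Suc (Suc k))}"

text \<open>Relators of G_1 = [H *_{d_i = x_i y_i^-1} (F_x \<times> F_y \<times> F_z)] \<times> <s_1>,
with the defining relations a_i = x_i z_i and b_i = y_i z_i.\<close>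

definition rels1 :: "'t set \<Rightarrow> 't word set \<Rightarrow> nat \<Rightarrow> (nat \<Rightarrow> 't) \<Rightarrow> 't gen word set" where
  "rels1 T RH p d =
     map (\<lambda>(t, e). (Tg t, e)) ` RH
     \<union> {comm (Xg i) (Yg j) | i j. i < p \<and> j < p}
     \<union> {comm (Xg i) (Zg j) | i j. i < p \<and> j < p}
     \<union> {comm (Yg i) (Zg j) | i j. i < p \<and> j < p}
     \<union> {[pos (Tg (d i)), pos (Yg i), ngt (Xg i)] | i. i < p}
     \<union> {[pos (Ag i), ngt (Zg i), ngt (Xg i)] | i. i < p}
     \<union> {[pos (Bg i), ngt (Zg i), ngt (Yg i)] | i. i < p}
     \<union> {comm (Sg 1) g | g. g \<in> gens0 T p}"

fun relsG :: "'t set \<Rightarrow> 't word set \<Rightarrow> nat \<Rightarrow> (nat \<Rightarrow> 't) \<Rightarrow> nat \<Rightarrow> 't gen word set" where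
  "relsG T RH p d 0 = rels1 T RH p d"
| "relsG T RH p d (Suc 0) = rels1 T RH p d"
| "relsG T RH p d (Suc (Suc 0)) = relsG T RH p d (Suc 0)
     \<union> {[ngt (Sg 2), pos (Ag i), pos (Sg 2), ngt (Bg i)] | i. i < p}"
| "relsG T RH p d (Suc (Suc (Suc k))) = relsG T RH p d (Suc (Suc k))
     \<union> {[ngt (Sg (Suc (Suc (Suc k)))), pos (Sg 1), pos (Sg (Suc (Suc (Suc k)))), ngt (Sg (Suc (Suc k)))]}"

end

theory Submission
  imports Defs
begin

text \<open>\<open>G\<^sub>m\<close> is an HNN extension of \<open>G\<^sub>m\<^sub>-\<^sub>1\<close> with stable letter \<open>s\<^sub>m\<close>, conjugating \<open>a\<^sub>i\<close> to \<open>b\<^sub>i\<close>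
if \<open>m = 2\<close> and \<open>s\<^sub>1\<close> to \<open>s\<^sub>m\<^sub>-\<^sub>1\<close> if \<open>m \<ge> 3\<close>. In both cases a retraction of \<open>G\<^sub>m\<^sub>-\<^sub>1\<close> onto a free group
sends every generator in \<open>S\<^sub>m\<^sub>-\<^sub>1\<close> to a word of length at most one and both families of associated
generators to the free basis. So the associated subgroups are free on these generators and the
retraction realises the isomorphism between them.
By Britton's lemma, a word over \<open>S\<^sub>m\<close> that represents an element of \<open>G\<^sub>m\<^sub>-\<^sub>1\<close> and contains \<open>s\<^sub>m\<close>
contains a pinch \<open>s\<^sub>m\<^sup>e c s\<^sub>m\<^sup>-\<^sup>e\<close> with \<open>c\<close> in an associated subgroup; replacing it by the image of
\<open>c\<close> in the other subgroup deletes two letters \<open>s\<^sub>m\<close> without lengthening \<open>c\<close>. Hence geodesics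
between elements of \<open>G\<^sub>m\<^sub>-\<^sub>1\<close> can be taken over \<open>S\<^sub>m\<^sub>-\<^sub>1\<close>.\<close>

lemma letters_Nil [simp]: "letters [] = {}"
  and letters_Cons [simp]: "letters (x # w) = insert (fst x) (letters w)"
  and letters_append [simp]: "letters (u @ v) = letters u \<union> letters v"
  by (auto simp: letters_def)

lemma letters_eq_set_map_fst: "letters w = set (map fst w)"
  by (simp add: letters_def)

lemma split_first_letter:
  assumes "a \<in> letters w"
  obtains c e w' where "w = c @ (a, e) # w'" and "a \<notin> letters c"
proof -
  from assms have "\<exists>x\<in>set w. fst x = a"
    by (auto simp: letters_def)
  then obtain c x w' where "w = c @ x # w'" "fst x = a" "\<forall>y\<in>set c. fst y \<noteq> a"
    by (rule split_list_first_propE)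
  then show thesis
    by (intro that[of c "snd x" w']) (auto simp: letters_def)
qed

lemma inv_word_Nil [simp]: "inv_word [] = []"
  and inv_word_Cons [simp]: "inv_word ((a, e) # w) = inv_word w @ [(a, \<not> e)]"
  and inv_word_append [simp]: "inv_word (u @ v) = inv_word v @ inv_word u"
  and length_inv_word [simp]: "length (inv_word w) = length w"
  by (simp_all add: inv_word_def)

lemma inv_word_inv_word [simp]: "inv_word (inv_word w) = w"
  by (induction w) (auto simp: inv_word_def)

lemma letters_inv_word [simp]: "letters (inv_word w) = letters w"
  by (force simp: inv_word_def letters_def image_iff)

lemma word_eq_refl [simp]: "word_eq R u u"
  by (simp add: word_eq_def)

lemma word_eq_sym: "word_eq R u v \<Longrightarrow> word_eq R v u"
  unfolding word_eq_def by (rule sympD[OF symp_rtranclp]) (auto intro: sympI)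

lemma word_eq_trans [trans]: "word_eq R u v \<Longrightarrow> word_eq R v w \<Longrightarrow> word_eq R u w"
  unfolding word_eq_def by (rule rtranclp_trans)

lemma word_eq_mono: "R \<subseteq> R' \<Longrightarrow> word_eq R u v \<Longrightarrow> word_eq R' u v"
  unfolding word_eq_def pres_step_def
  by (erule rtranclp_mono[THEN predicate2D, rotated]) blast

lemma word_eq_pres_step: "pres_step R u v \<Longrightarrow> word_eq R u v"
  unfolding word_eq_def by auto

lemma word_eq_cancel: "word_eq R (p @ (a, e) # (a, \<not> e) # q) (p @ q)"
  by (rule word_eq_pres_step) (auto simp: pres_step_def)

lemma word_eq_free_cancel [simp]:
  "word_eq {} [(i, False), (i, True)] []" "word_eq {} [(i, True), (i, False)] []"
  using word_eq_cancel[of "{}" "[]" i False "[]"] word_eq_cancel[of "{}" "[]" i True "[]"] by simp_all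

lemma word_eq_relator: "r \<in> R \<Longrightarrow> word_eq R (p @ r @ q) (p @ q)"
  by (rule word_eq_pres_step) (unfold pres_step_def, blast)

lemma pres_step_cong: "pres_step R u v \<Longrightarrow> pres_step R (p @ u @ q) (p @ v @ q)"
  unfolding pres_step_def by (elim disjE exE conjE) (metis append.assoc append_Cons)+

lemma word_eq_cong: "word_eq R u v \<Longrightarrow> word_eq R (p @ u @ q) (p @ v @ q)"
  unfolding word_eq_def
  by (induction rule: rtranclp_induct) (auto intro: rtranclp.rtrancl_into_rtrancl pres_step_cong)

lemma word_eq_append: "word_eq R u v \<Longrightarrow> word_eq R u' v' \<Longrightarrow> word_eq R (u @ u') (v @ v')"
  by (metis append_Nil append_Nil2 word_eq_cong word_eq_trans)

lemma word_eq_append_left: "word_eq R u v \<Longrightarrow> word_eq R (p @ u) (p @ v)"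
  and word_eq_append_right: "word_eq R u v \<Longrightarrow> word_eq R (u @ q) (v @ q)"
  using word_eq_cong[of R u v p "[]"] word_eq_cong[of R u v "[]" q] by simp_all

lemma word_eq_cancel_word: "word_eq R (p @ w @ inv_word w @ q) (p @ q)"
proof (induction w arbitrary: p q)
  case (Cons x w)
  obtain a e where x: "x = (a, e)" by fastforce
  have "word_eq R (p @ x # w @ inv_word w @ (a, \<not> e) # q) (p @ x # (a, \<not> e) # q)"
    using Cons.IH[of "p @ [x]" "(a, \<not> e) # q"] by simp
  also have "word_eq R \<dots> (p @ q)"
    using word_eq_cancel unfolding x .
  finally show ?case using x by simp
qed simp

lemma word_eq_cancel_inv_word: "word_eq R (p @ inv_word w @ w @ q) (p @ q)"
  using word_eq_cancel_word[of R p "inv_word w" q] by simp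

lemma word_eq_append_inv_word: "word_eq R (w @ inv_word w) []"
  using word_eq_cancel_word[of R "[]" w "[]"] by simp

lemma word_eq_inv_word: "word_eq R u v \<Longrightarrow> word_eq R (inv_word u) (inv_word v)"
proof -
  assume uv: "word_eq R u v"
  have "word_eq R (inv_word u) (inv_word u @ v @ inv_word v)"
    using word_eq_sym[OF word_eq_cancel_word[of R "inv_word u" v "[]"]] by simp
  also have "word_eq R \<dots> (inv_word u @ u @ inv_word v)"
    using word_eq_cong[OF word_eq_sym[OF uv]] .
  also have "word_eq R \<dots> (inv_word v)"
    using word_eq_cancel_inv_word[of R "[]" u "inv_word v"] by simp
  finally show ?thesis .
qed

definition subst :: "('a \<Rightarrow> 'b word) \<Rightarrow> 'a word \<Rightarrow> 'b word" where
  "subst f w = concat (map (\<lambda>(x, e). if e then inv_word (f x) else f x) w)"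

lemma subst_Nil [simp]: "subst f [] = []"
  and subst_Cons [simp]: "subst f ((x, e) # w) = (if e then inv_word (f x) else f x) @ subst f w"
  and subst_append [simp]: "subst f (u @ v) = subst f u @ subst f v"
  by (simp_all add: subst_def)

lemma subst_inv_word [simp]: "subst f (inv_word w) = inv_word (subst f w)"
  by (induction w) auto

lemma subst_word_eq:
  assumes relators: "\<forall>r\<in>R. word_eq R' (subst f r) []" and "word_eq R u v"
  shows "word_eq R' (subst f u) (subst f v)"
proof -
  have step: "word_eq R' (subst f u) (subst f v)" if "pres_step R u v" for u v
    using that unfolding pres_step_def
  proof (elim disjE exE conjE)
    fix p q a e assume "u = p @ [(a, e), (a, \<not> e)] @ q" "v = p @ q"
    then show ?thesis
      using word_eq_cancel_word[of R' "subst f p" "f a"] word_eq_cancel_inv_word[of R' "subst f p" "f a"]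
      by (cases e) simp_all
  next
    fix p q r assume "r \<in> R" "u = p @ r @ q" "v = p @ q"
    then show ?thesis
      using word_eq_cong[OF relators[rule_format], of r "subst f p" "subst f q"] by simp
  qed
  from \<open>word_eq R u v\<close> show ?thesis
    unfolding word_eq_def[of R]
    by (induction rule: rtranclp_induct) (simp, use step word_eq_sym word_eq_trans in blast)
qed

definition rename :: "('a \<Rightarrow> 'b) \<Rightarrow> 'a word \<Rightarrow> 'b word" where
  "rename f = map (apfst f)"

lemma rename_Nil [simp]: "rename f [] = []"
  and rename_Cons [simp]: "rename f ((x, e) # w) = (f x, e) # rename f w"
  and rename_append [simp]: "rename f (u @ v) = rename f u @ rename f v"
  and length_rename [simp]: "length (rename f w) = length w"
  and letters_rename: "letters (rename f w) = f ` letters w"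
  by (auto simp: rename_def letters_def image_image)

lemma rename_inv_word [simp]: "rename f (inv_word w) = inv_word (rename f w)"
  by (induction w) auto

lemma rename_eq_subst: "rename f w = subst (\<lambda>x. [(f x, False)]) w"
  by (induction w) auto

lemma subst_rename_eq_Nil: "(\<And>x. f (g x) = []) \<Longrightarrow> subst f (rename g w) = []"
  by (induction w) auto

lemma rename_word_eq: "word_eq {} U W \<Longrightarrow> word_eq R (rename f U) (rename f W)"
  unfolding rename_eq_subst by (rule subst_word_eq) auto

lemma foldr_word_eq:
  assumes closed: "\<And>x \<omega>. V \<omega> \<Longrightarrow> V (F x \<omega>)"
    and cancel: "\<And>a e \<omega>. V \<omega> \<Longrightarrow> F (a, e) (F (a, \<not> e) \<omega>) = \<omega>"
    and relator: "\<And>r \<omega>. r \<in> R \<Longrightarrow> V \<omega> \<Longrightarrow> foldr F r \<omega> = \<omega>"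
    and "word_eq R u v" and "V \<omega>"
  shows "foldr F u \<omega> = foldr F v \<omega>"
proof -
  have closed_foldr: "V (foldr F w \<omega>)" if "V \<omega>" for w \<omega>
    using that by (induction w) (auto intro: closed)
  have step: "foldr F u \<omega> = foldr F v \<omega>" if "pres_step R u v" "V \<omega>" for u v \<omega>
    using that(1) unfolding pres_step_def
    by (elim disjE exE conjE) (simp_all add: cancel relator closed_foldr[OF that(2)])
  from \<open>word_eq R u v\<close> show ?thesis
    unfolding word_eq_def
    by (induction rule: rtranclp_induct) (auto simp: step \<open>V \<omega>\<close>)
qed

lemma Least_eq_if_mutually_bounded:
  fixes P Q :: "nat \<Rightarrow> bool"
  assumes "P n" and P_Q: "\<And>n. P n \<Longrightarrow> Q n" and Q_P: "\<And>n. Q n \<Longrightarrow> \<exists>m\<le>n. P m"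
  shows "Least P = Least Q"
proof (rule antisym)
  have "Q (Least Q)"
    using assms by (blast intro: LeastI)
  then obtain m where "m \<le> Least Q" "P m"
    using Q_P by blast
  then show "Least P \<le> Least Q"
    using Least_le[of P m] by linarith
  show "Least Q \<le> Least P"
    using assms by (blast intro: Least_le LeastI)
qed

section \<open>HNN extensions with a retraction onto a free group\<close>

text \<open>The map \<open>\<rho>\<close> induces a homomorphism from \<open>\<langle>S0 | R0\<rangle>\<close> onto the free group on \<open>I\<close> sending
both \<open>\<alpha> i\<close> and \<open>\<beta> i\<close> to \<open>i\<close>; so the subgroups generated by \<open>\<alpha>\<close> and by \<open>\<beta>\<close> are free on these
generators, and \<open>\<alpha> i \<mapsto> \<beta> i\<close> is an isomorphism between them.\<close>

locale hnn_retraction =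
  fixes R0 :: "'a word set" and S0 :: "'a set" and t :: 'a and I :: "'i set"
    and \<alpha> \<beta> :: "'i \<Rightarrow> 'a" and \<rho> :: "'a \<Rightarrow> 'i word"
  assumes t_notin_S0: "t \<notin> S0"
    and t_notin_relators: "\<forall>r\<in>R0. t \<notin> letters r"
    and associated_in_S0: "\<forall>i\<in>I. \<alpha> i \<in> S0 \<and> \<beta> i \<in> S0"
    and \<rho>_\<alpha>: "\<forall>i\<in>I. \<rho> (\<alpha> i) = [(i, False)]"
    and \<rho>_\<beta>: "\<forall>i\<in>I. \<rho> (\<beta> i) = [(i, False)]"
    and \<rho>_relators: "\<forall>r\<in>R0. word_eq {} (subst \<rho> r) []"
    and \<rho>_S0: "\<forall>x\<in>S0. length (\<rho> x) \<le> 1 \<and> letters (\<rho> x) \<subseteq> I"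
begin

abbreviation eq0 (infix "\<approx>" 50) where "u \<approx> v \<equiv> word_eq R0 u v"

definition hnn_relators :: "'a word set" where
  "hnn_relators = R0 \<union> {[(t, True), (\<alpha> i, False), (t, False), (\<beta> i, True)] | i. i \<in> I}"

lemma relators_subset_hnn_relators: "R0 \<subseteq> hnn_relators"
  unfolding hnn_relators_def by blast

definition canon :: "'a word \<Rightarrow> 'a word" where
  "canon w = (SOME v. w \<approx> v)"

lemma word_eq_canon: "w \<approx> canon w"
  unfolding canon_def by (rule someI[of _ w]) simp

lemma canon_word_eq: "canon w \<approx> w"
  by (rule word_eq_sym, rule word_eq_canon)

lemma canon_eq_iff: "canon u = canon v \<longleftrightarrow> u \<approx> v"
proof
  assume "u \<approx> v"
  then have "word_eq R0 u = word_eq R0 v"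
    by (intro ext iffI) (auto intro: word_eq_trans word_eq_sym)
  then show "canon u = canon v"
    unfolding canon_def by simp
qed (metis word_eq_canon word_eq_sym word_eq_trans)

lemma canon_canon [simp]: "canon (canon w) = canon w"
  using canon_eq_iff word_eq_canon word_eq_sym by blast

lemma canon_append_canon [simp]: "canon (p @ canon w) = canon (p @ w)"
  unfolding canon_eq_iff by (intro word_eq_append_left canon_word_eq)

lemma canon_Cons_canon [simp]: "canon (x # canon w) = canon (x # w)"
  using canon_append_canon[of "[x]" w] by simp

definition one :: "'a word" where
  "one = canon []"

text \<open>Write \<open>t\<^sup>e\<close> for the letter \<open>(t, e)\<close>; it is \<open>t\<^sup>-\<^sup>1\<close> when \<open>e\<close> holds. The relation
\<open>t\<^sup>-\<^sup>1 (\<alpha> i) t = \<beta> i\<close> says that \<open>t\<^sup>e\<close> conjugates the subgroup generated by \<open>assoc e\<close> onto the one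
generated by \<open>assoc (\<not> e)\<close>.\<close>

definition assoc :: "bool \<Rightarrow> 'i \<Rightarrow> 'a" where
  "assoc e = (if e then \<alpha> else \<beta>)"

lemma assoc_True [simp]: "assoc True = \<alpha>" and assoc_False [simp]: "assoc False = \<beta>"
  by (simp_all add: assoc_def)

definition in_sub :: "('i \<Rightarrow> 'a) \<Rightarrow> 'a word \<Rightarrow> bool" where
  "in_sub X h \<longleftrightarrow> (\<exists>W. letters W \<subseteq> I \<and> h \<approx> rename X W)"

lemma in_sub_word_eq: "in_sub X h \<Longrightarrow> h \<approx> h' \<Longrightarrow> in_sub X h'"
  unfolding in_sub_def by (meson word_eq_sym word_eq_trans)

lemma in_sub_rename: "letters W \<subseteq> I \<Longrightarrow> in_sub X (rename X W)"
  unfolding in_sub_def by auto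

lemma in_sub_Nil [simp]: "in_sub X []"
  using in_sub_rename[of "[]"] by simp

lemma in_sub_canon [simp]: "in_sub X (canon h) \<longleftrightarrow> in_sub X h"
  by (meson word_eq_canon in_sub_word_eq word_eq_sym)

lemma in_sub_one [simp]: "in_sub X one"
  by (simp add: one_def)

lemma in_sub_append:
  assumes "in_sub X u" and "in_sub X v"
  shows "in_sub X (u @ v)"
proof -
  obtain U W where "letters U \<subseteq> I" "u \<approx> rename X U" "letters W \<subseteq> I" "v \<approx> rename X W"
    using assms unfolding in_sub_def by blast
  then show ?thesis
    unfolding in_sub_def by (intro exI[of _ "U @ W"]) (auto intro: word_eq_append)
qed

lemma in_sub_inv_word: "in_sub X u \<Longrightarrow> in_sub X (inv_word u)"
  unfolding in_sub_def by (metis letters_inv_word rename_inv_word word_eq_inv_word)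

lemma in_sub_append_inv_word: "in_sub X (h @ inv_word h)"
  using in_sub_word_eq[OF in_sub_Nil word_eq_sym[OF word_eq_append_inv_word]] .

lemma in_sub_append_left_iff: "in_sub X u \<Longrightarrow> in_sub X (u @ v) \<longleftrightarrow> in_sub X v"
  using in_sub_append[OF in_sub_inv_word, of X u "u @ v"] word_eq_cancel_inv_word[of R0 "[]" u v]
  by (auto intro: in_sub_append in_sub_word_eq)

lemma in_sub_append_right_iff: "in_sub X v \<Longrightarrow> in_sub X (u @ v) \<longleftrightarrow> in_sub X u"
  using in_sub_append[OF _ in_sub_inv_word, of X "u @ v" v] word_eq_cancel_word[of R0 u v "[]"]
  by (auto intro: in_sub_append in_sub_word_eq)

abbreviation retract :: "'a word \<Rightarrow> 'i word" where
  "retract \<equiv> subst \<rho>"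

lemma retract_word_eq: "u \<approx> v \<Longrightarrow> word_eq {} (retract u) (retract v)"
  by (rule subst_word_eq[OF \<rho>_relators])

lemma retract_rename_assoc: "letters W \<subseteq> I \<Longrightarrow> retract (rename (assoc e) W) = W"
proof (induction W)
  case (Cons x W)
  then show ?case using \<rho>_\<alpha> \<rho>_\<beta> by (cases x; cases e) auto
qed simp

lemma retract_S0: "letters c \<subseteq> S0 \<Longrightarrow> letters (retract c) \<subseteq> I \<and> length (retract c) \<le> length c"
proof (induction c)
  case (Cons x c)
  obtain a e where x: "x = (a, e)" by fastforce
  with Cons.prems \<rho>_S0 have "length (\<rho> a) \<le> 1" "letters (\<rho> a) \<subseteq> I" by auto
  with Cons x show ?case by auto
qed simp

text \<open>For \<open>h\<close> in the subgroup generated by \<open>assoc e\<close>, \<open>transfer e h\<close> represents \<open>t\<^sup>e h t\<^sup>-\<^sup>e\<close>.\<close>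

definition transfer :: "bool \<Rightarrow> 'a word \<Rightarrow> 'a word" where
  "transfer e h = rename (assoc (\<not> e)) (retract h)"

lemma transfer_append: "transfer e (u @ v) = transfer e u @ transfer e v"
  by (simp add: transfer_def)

lemma transfer_word_eq: "u \<approx> v \<Longrightarrow> transfer e u \<approx> transfer e v"
  unfolding transfer_def by (intro rename_word_eq retract_word_eq)

lemma transfer_rename_assoc:
  "letters W \<subseteq> I \<Longrightarrow> transfer e (rename (assoc e) W) = rename (assoc (\<not> e)) W"
  by (simp add: transfer_def retract_rename_assoc)

lemma in_sub_transfer: "in_sub (assoc e) h \<Longrightarrow> in_sub (assoc (\<not> e)) (transfer e h)"
  unfolding in_sub_def by (metis transfer_word_eq transfer_rename_assoc)

lemma transfer_transfer: "in_sub (assoc e) h \<Longrightarrow> transfer (\<not> e) (transfer e h) \<approx> h"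
proof -
  assume "in_sub (assoc e) h"
  then obtain W where W: "letters W \<subseteq> I" "h \<approx> rename (assoc e) W"
    unfolding in_sub_def by blast
  have "transfer (\<not> e) (transfer e h) \<approx> transfer (\<not> e) (transfer e (rename (assoc e) W))"
    using W(2) by (intro transfer_word_eq)
  also have "\<dots> = rename (assoc e) W"
    using W(1) by (simp add: transfer_rename_assoc)
  also have "\<dots> \<approx> h"
    using W(2) by (rule word_eq_sym)
  finally show ?thesis .
qed

lemma transfer_S0:
  assumes "letters c \<subseteq> S0"
  shows "letters (transfer e c) \<subseteq> S0" and "length (transfer e c) \<le> length c"
  using retract_S0[OF assms] associated_in_S0
  by (auto simp: transfer_def letters_rename assoc_def)

definition coset_rep :: "('i \<Rightarrow> 'a) \<Rightarrow> 'a word \<Rightarrow> 'a word" where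
  "coset_rep X h = (if in_sub X h then one else canon (SOME r. in_sub X (h @ inv_word r)))"

lemma in_sub_coset_rep: "in_sub X (h @ inv_word (coset_rep X h))"
proof (cases "in_sub X h")
  case True
  then have "coset_rep X h = one"
    unfolding coset_rep_def by (rule if_P)
  then show ?thesis
    using in_sub_append[OF True in_sub_inv_word[OF in_sub_one]] by simp
next
  case False
  let ?r = "SOME r. in_sub X (h @ inv_word r)"
  have "in_sub X (h @ inv_word ?r)"
    by (rule someI, rule in_sub_append_inv_word)
  moreover have "h @ inv_word ?r \<approx> h @ inv_word (canon ?r)"
    using word_eq_cong[OF word_eq_inv_word[OF word_eq_canon[of ?r]], of h "[]"] by simp
  ultimately show ?thesis
    using False by (simp add: coset_rep_def) (rule in_sub_word_eq)
qed

lemma coset_rep_eq: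
  assumes "in_sub X (h @ inv_word h')"
  shows "coset_rep X h = coset_rep X h'"
proof -
  have same: "in_sub X (h @ inv_word r) \<longleftrightarrow> in_sub X (h' @ inv_word r)" for r
  proof -
    have "h @ inv_word r \<approx> (h @ inv_word h') @ h' @ inv_word r"
      using word_eq_sym[OF word_eq_cancel_inv_word[of R0 h h' "inv_word r"]] by simp
    then show ?thesis
      using in_sub_append_left_iff[OF assms] in_sub_word_eq word_eq_sym by blast
  qed
  from same[of "[]"] show ?thesis
    unfolding coset_rep_def by (simp add: same)
qed

lemma coset_rep_coset_rep [simp]: "coset_rep X (coset_rep X h) = coset_rep X h"
  by (rule coset_rep_eq) (use in_sub_inv_word[OF in_sub_coset_rep[of X h]] in simp)

lemma coset_rep_eq_one_iff: "coset_rep X h = one \<longleftrightarrow> in_sub X h"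
  using in_sub_coset_rep[of X h] in_sub_append_right_iff[OF in_sub_inv_word[OF in_sub_one]]
  by (auto simp: coset_rep_def)

lemma coset_rep_left_mult: "in_sub X a \<Longrightarrow> coset_rep X (a @ g) = coset_rep X g"
  by (rule coset_rep_eq)
    (use in_sub_word_eq word_eq_sym[OF word_eq_cancel_word[of R0 a g "[]"]] in simp)

lemma coset_rep_canon [simp]: "coset_rep X (canon h) = coset_rep X h"
proof (rule coset_rep_eq)
  have "h @ inv_word h \<approx> canon h @ inv_word h"
    using word_eq_cong[OF word_eq_canon, of "[]" h "inv_word h"] by simp
  then show "in_sub X (canon h @ inv_word h)"
    using in_sub_append_inv_word in_sub_word_eq by blast
qed

text \<open>A state \<open>(h, [(e\<^sub>1, r\<^sub>1), ..., (e\<^sub>n, r\<^sub>n)])\<close> stands for the normal form \<open>h t\<^sup>e\<^sup>1 r\<^sub>1 ... t\<^sup>e\<^sup>n r\<^sub>n\<close>,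
where \<open>r\<^sub>k\<close> is the chosen representative of its coset of the subgroup generated by \<open>assoc e\<^sub>k\<close>
and no factor \<open>t\<^sup>e r t\<^sup>-\<^sup>e\<close> has \<open>r = one\<close>. Letters act by left multiplication.\<close>

type_synonym 'b nf_state = "'b word \<times> (bool \<times> 'b word) list"

definition t_step :: "bool \<Rightarrow> 'a nf_state \<Rightarrow> 'a nf_state" where
  "t_step e \<omega> = (let (h, L) = \<omega>; r = coset_rep (assoc e) h in
     if in_sub (assoc e) h \<and> L \<noteq> [] \<and> fst (hd L) = (\<not> e)
     then (canon (transfer e h @ snd (hd L)), tl L)
     else (canon (transfer e (h @ inv_word r)), (e, r) # L))"

lemma t_step_cancel:
  "in_sub (assoc e) h \<Longrightarrow> t_step e (h, (\<not> e, g) # L) = (canon (transfer e h @ g), L)"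
  by (simp add: t_step_def)

lemma t_step_push:
  "\<not> (in_sub (assoc e) h \<and> L \<noteq> [] \<and> fst (hd L) = (\<not> e)) \<Longrightarrow>
    t_step e (h, L) =
      (canon (transfer e (h @ inv_word (coset_rep (assoc e) h))), (e, coset_rep (assoc e) h) # L)"
  unfolding t_step_def Let_def by (simp only: prod.case if_False)

fun reduced_stack :: "(bool \<times> 'a word) list \<Rightarrow> bool" where
  "reduced_stack ((e, r) # (e', r') # L) \<longleftrightarrow>
     (e' = (\<not> e) \<longrightarrow> r \<noteq> one) \<and> reduced_stack ((e', r') # L)"
| "reduced_stack _ \<longleftrightarrow> True"

lemma reduced_stack_tl: "reduced_stack (x # L) \<Longrightarrow> reduced_stack L"
  by (cases x; cases L) auto

definition nf_valid :: "'a nf_state \<Rightarrow> bool" where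
  "nf_valid \<omega> \<longleftrightarrow> canon (fst \<omega>) = fst \<omega> \<and>
     (\<forall>(e, r) \<in> set (snd \<omega>). coset_rep (assoc e) r = r) \<and> reduced_stack (snd \<omega>)"

lemma nf_valid_t_step:
  assumes "nf_valid \<omega>"
  shows "nf_valid (t_step e \<omega>)"
proof -
  obtain h L where \<omega>: "\<omega> = (h, L)" by fastforce
  show ?thesis
  proof (cases "in_sub (assoc e) h \<and> L \<noteq> [] \<and> fst (hd L) = (\<not> e)")
    case True
    then obtain g L' where "L = (\<not> e, g) # L'" by (cases L) auto
    then show ?thesis
      using assms True \<omega> by (auto simp: nf_valid_def t_step_cancel dest: reduced_stack_tl)
  next
    case False
    then have "reduced_stack ((e, coset_rep (assoc e) h) # L)"
      using assms \<omega> by (cases L) (auto simp: nf_valid_def coset_rep_eq_one_iff)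
    then show ?thesis
      using assms False \<omega> by (simp add: nf_valid_def t_step_push)
  qed
qed

lemma t_step_inverse_cancel:
  assumes valid: "nf_valid (h, (\<not> e, g) # L)" and h: "in_sub (assoc e) h"
  shows "t_step (\<not> e) (t_step e (h, (\<not> e, g) # L)) = (h, (\<not> e, g) # L)"
proof -
  let ?h' = "canon (transfer e h @ g)"
  have g: "coset_rep (assoc (\<not> e)) g = g" and "reduced_stack ((\<not> e, g) # L)"
    using valid by (auto simp: nf_valid_def)
  have rep: "coset_rep (assoc (\<not> e)) ?h' = g"
    using coset_rep_left_mult[OF in_sub_transfer[OF h]] g by simp
  have no_cancel: "\<not> (in_sub (assoc (\<not> e)) ?h' \<and> L \<noteq> [] \<and> fst (hd L) = e)"
    using rep \<open>reduced_stack _\<close> coset_rep_eq_one_iff[of "assoc (\<not> e)" ?h'] by (cases L) auto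
  have "?h' @ inv_word g \<approx> (transfer e h @ g) @ inv_word g"
    by (rule word_eq_append_right, rule canon_word_eq)
  also have "\<dots> \<approx> transfer e h"
    using word_eq_cancel_word[of R0 "transfer e h" g "[]"] by simp
  finally have "transfer (\<not> e) (?h' @ inv_word g) \<approx> transfer (\<not> e) (transfer e h)"
    by (rule transfer_word_eq)
  also have "\<dots> \<approx> h"
    by (rule transfer_transfer[OF h])
  finally show ?thesis
    using valid h no_cancel rep canon_eq_iff[of _ h]
    by (simp add: t_step_cancel t_step_push nf_valid_def)
qed

lemma t_step_inverse_push:
  assumes "canon h = h" and no_cancel: "\<not> (in_sub (assoc e) h \<and> L \<noteq> [] \<and> fst (hd L) = (\<not> e))"
  shows "t_step (\<not> e) (t_step e (h, L)) = (h, L)"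
proof -
  let ?r = "coset_rep (assoc e) h"
  let ?h' = "canon (transfer e (h @ inv_word ?r))"
  have r: "in_sub (assoc e) (h @ inv_word ?r)"
    by (rule in_sub_coset_rep)
  have "transfer (\<not> e) ?h' @ ?r \<approx> transfer (\<not> e) (transfer e (h @ inv_word ?r)) @ ?r"
    by (intro word_eq_append_right transfer_word_eq canon_word_eq)
  also have "\<dots> \<approx> (h @ inv_word ?r) @ ?r"
    by (intro word_eq_append_right transfer_transfer r)
  also have "\<dots> \<approx> h"
    using word_eq_cancel_inv_word[of R0 h ?r "[]"] by simp
  finally have "canon (transfer (\<not> e) ?h' @ ?r) = h"
    using \<open>canon h = h\<close> canon_eq_iff[of _ h] by simp
  moreover have "t_step (\<not> e) (?h', (e, ?r) # L) = (canon (transfer (\<not> e) ?h' @ ?r), L)"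
    using t_step_cancel[of "\<not> e" ?h' ?r L] in_sub_transfer[OF r] by simp
  ultimately show ?thesis
    using no_cancel by (simp add: t_step_push)
qed

lemma t_step_inverse:
  assumes "nf_valid \<omega>"
  shows "t_step (\<not> e) (t_step e \<omega>) = \<omega>"
proof -
  obtain h L where \<omega>: "\<omega> = (h, L)" by fastforce
  show ?thesis
  proof (cases "in_sub (assoc e) h \<and> L \<noteq> [] \<and> fst (hd L) = (\<not> e)")
    case True
    then obtain g L' where "L = (\<not> e, g) # L'" by (cases L) auto
    then show ?thesis
      using t_step_inverse_cancel assms True \<omega> by simp
  next
    case False
    then show ?thesis
      using t_step_inverse_push assms \<omega> by (simp add: nf_valid_def)
  qed
qed

definition nf_mult :: "'a word \<Rightarrow> 'a nf_state \<Rightarrow> 'a nf_state" where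
  "nf_mult w \<omega> = (canon (w @ fst \<omega>), snd \<omega>)"

lemma canon_transfer_canon [simp]: "canon (transfer e (canon w) @ q) = canon (transfer e w @ q)"
  unfolding canon_eq_iff by (intro word_eq_append_right transfer_word_eq canon_word_eq)

text \<open>The defining relation \<open>t\<^sup>e a = (transfer e a) t\<^sup>e\<close>, at the level of the action.\<close>

lemma t_step_nf_mult:
  assumes a: "in_sub (assoc e) a"
  shows "t_step e (nf_mult a \<omega>) = nf_mult (transfer e a) (t_step e \<omega>)"
proof -
  obtain h L where \<omega>: "\<omega> = (h, L)" by fastforce
  have rep: "coset_rep (assoc e) (canon (a @ h)) = coset_rep (assoc e) h"
    using coset_rep_left_mult[OF a] by simp
  have sub: "in_sub (assoc e) (canon (a @ h)) \<longleftrightarrow> in_sub (assoc e) h"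
    using in_sub_append_left_iff[OF a] by simp
  show ?thesis
  proof (cases "in_sub (assoc e) h \<and> L \<noteq> [] \<and> fst (hd L) = (\<not> e)")
    case True
    then obtain g L' where "L = (\<not> e, g) # L'" by (cases L) auto
    then show ?thesis
      using True sub \<omega> by (simp add: nf_mult_def t_step_cancel transfer_append)
  next
    case False
    then show ?thesis
      using sub rep \<omega> by (simp add: nf_mult_def t_step_push transfer_append)
  qed
qed

definition nf_act :: "'a \<times> bool \<Rightarrow> 'a nf_state \<Rightarrow> 'a nf_state" where
  "nf_act x \<omega> = (if fst x = t then t_step (snd x) \<omega> else nf_mult [x] \<omega>)"

lemma nf_valid_nf_act: "nf_valid \<omega> \<Longrightarrow> nf_valid (nf_act x \<omega>)"
  by (auto simp: nf_act_def nf_valid_t_step) (simp add: nf_valid_def nf_mult_def)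

lemma nf_act_cancel: "nf_valid \<omega> \<Longrightarrow> nf_act (a, e) (nf_act (a, \<not> e) \<omega>) = \<omega>"
  using t_step_inverse[of \<omega> "\<not> e"] word_eq_cancel[of R0 "[]" a e "fst \<omega>"]
  by (cases \<omega>) (auto simp: nf_act_def nf_mult_def nf_valid_def canon_eq_iff[symmetric])

lemma foldr_nf_act_t_free:
  "t \<notin> letters w \<Longrightarrow> nf_valid \<omega> \<Longrightarrow> foldr nf_act w \<omega> = nf_mult w \<omega>"
  by (induction w) (auto simp: nf_act_def nf_mult_def nf_valid_def)

lemma foldr_nf_act_hnn_relator:
  assumes i: "i \<in> I" and valid: "nf_valid \<omega>"
  shows "foldr nf_act [(t, True), (\<alpha> i, False), (t, False), (\<beta> i, True)] \<omega> = \<omega>"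
proof -
  have t: "\<alpha> i \<noteq> t" "\<beta> i \<noteq> t"
    using associated_in_S0 t_notin_S0 i by auto
  have \<alpha>: "in_sub (assoc True) [(\<alpha> i, False)]" and "transfer True [(\<alpha> i, False)] = [(\<beta> i, False)]"
    using in_sub_rename[of "[(i, False)]" \<alpha>] i \<rho>_\<alpha> by (simp_all add: transfer_def)
  let ?\<omega>' = "nf_mult [(\<beta> i, True)] \<omega>"
  have "nf_valid ?\<omega>'"
    using nf_valid_nf_act[OF valid, of "(\<beta> i, True)"] t by (simp add: nf_act_def)
  then have "foldr nf_act [(t, True), (\<alpha> i, False), (t, False), (\<beta> i, True)] \<omega>
      = nf_mult [(\<beta> i, False)] ?\<omega>'"
    using t t_step_nf_mult[OF \<alpha>] t_step_inverse[of ?\<omega>' False] \<open>transfer True _ = _\<close>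
    by (simp add: nf_act_def)
  also have "\<dots> = nf_act (\<beta> i, False) (nf_act (\<beta> i, \<not> False) \<omega>)"
    using t by (simp add: nf_act_def)
  also have "\<dots> = \<omega>"
    by (rule nf_act_cancel[OF valid])
  finally show ?thesis .
qed

lemma foldr_nf_act_word_eq:
  assumes "word_eq hnn_relators u v" and "nf_valid \<omega>"
  shows "foldr nf_act u \<omega> = foldr nf_act v \<omega>"
proof (rule foldr_word_eq[of nf_valid, OF nf_valid_nf_act nf_act_cancel _ assms])
  fix r \<omega> assume "r \<in> hnn_relators" and valid: "nf_valid \<omega>"
  then consider "r \<in> R0" | i where "i \<in> I" "r = [(t, True), (\<alpha> i, False), (t, False), (\<beta> i, True)]"
    unfolding hnn_relators_def by blast
  then show "foldr nf_act r \<omega> = \<omega>"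
  proof cases
    case 1
    then have "canon (r @ fst \<omega>) = fst \<omega>"
      using valid word_eq_relator[of r R0 "[]" "fst \<omega>"] canon_eq_iff[of _ "fst \<omega>"]
      by (simp add: nf_valid_def)
    then show ?thesis
      using 1 t_notin_relators valid by (simp add: foldr_nf_act_t_free nf_mult_def)
  next
    case 2
    then show ?thesis using foldr_nf_act_hnn_relator valid by simp
  qed
qed

definition nf_base :: "'a nf_state" where
  "nf_base = (one, [])"

lemma nf_valid_nf_base: "nf_valid nf_base"
  by (simp add: nf_base_def nf_valid_def one_def)

subsection \<open>Britton's lemma\<close>

definition has_pinch :: "'a word \<Rightarrow> bool" where
  "has_pinch w \<longleftrightarrow>
     (\<exists>p c q e. w = p @ [(t, e)] @ c @ [(t, \<not> e)] @ q \<and> t \<notin> letters c \<and> in_sub (assoc e) c)"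

lemma has_pinch_Cons: "has_pinch w \<Longrightarrow> has_pinch (x # w)"
  unfolding has_pinch_def by (metis append_Cons)

abbreviation t_count :: "'a word \<Rightarrow> nat" where
  "t_count w \<equiv> count_list (map fst w) t"

text \<open>The second conjunct is what forbids a cancellation when a further letter \<open>t\<close> is read:
such a cancellation would exhibit a pinch.\<close>

definition stack_tracks :: "'a word \<Rightarrow> 'a nf_state \<Rightarrow> bool" where
  "stack_tracks w \<omega> \<longleftrightarrow> length (snd \<omega>) = t_count w \<and>
     (\<forall>c e w'. w = c @ (t, e) # w' \<longrightarrow> t \<notin> letters c \<longrightarrow>
        fst (hd (snd \<omega>)) = e \<and> in_sub (assoc (\<not> e)) (inv_word c @ fst \<omega>))"

lemma stack_tracks_Cons_letter:
  assumes "a \<noteq> t" and tracks: "stack_tracks w (h, L)"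
  shows "stack_tracks ((a, b) # w) (nf_act (a, b) (h, L))"
proof -
  have "fst (hd L) = e \<and> in_sub (assoc (\<not> e)) (inv_word c @ canon ((a, b) # h))"
    if split: "(a, b) # w = c @ (t, e) # w'" "t \<notin> letters c" for c e w'
  proof -
    obtain c0 where c: "c = (a, b) # c0" and "w = c0 @ (t, e) # w'" "t \<notin> letters c0"
      using split \<open>a \<noteq> t\<close> by (cases c) auto
    then have "fst (hd L) = e" and sub: "in_sub (assoc (\<not> e)) (inv_word c0 @ h)"
      using tracks by (auto simp: stack_tracks_def)
    have "inv_word c @ canon ((a, b) # h) \<approx> inv_word c0 @ (a, \<not> b) # (a, b) # h"
      using word_eq_append_left[OF canon_word_eq, of "inv_word c"] c by simp
    also have "\<dots> \<approx> inv_word c0 @ h"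
      using word_eq_cancel[of R0 "inv_word c0" a "\<not> b" h] by simp
    finally show ?thesis
      using \<open>fst (hd L) = e\<close> sub in_sub_word_eq word_eq_sym by blast
  qed
  then show ?thesis
    using tracks \<open>a \<noteq> t\<close> by (simp add: stack_tracks_def nf_act_def nf_mult_def)
qed

lemma stack_tracks_no_cancel:
  assumes no_pinch: "\<not> has_pinch ((t, e) # w)" and tracks: "stack_tracks w (h, L)"
  shows "\<not> (in_sub (assoc e) h \<and> L \<noteq> [] \<and> fst (hd L) = (\<not> e))"
proof
  assume cancel: "in_sub (assoc e) h \<and> L \<noteq> [] \<and> fst (hd L) = (\<not> e)"
  then have "t_count w \<noteq> 0"
    using tracks unfolding stack_tracks_def by force
  then have "t \<in> letters w"
    by (simp add: letters_eq_set_map_fst count_list_0_iff)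
  then obtain c e' w' where w: "w = c @ (t, e') # w'" and "t \<notin> letters c"
    by (rule split_first_letter)
  then have "fst (hd L) = e'" and "in_sub (assoc (\<not> e')) (inv_word c @ h)"
    using tracks unfolding stack_tracks_def by auto
  then have "e' = (\<not> e)" and "in_sub (assoc e) (inv_word c @ h)"
    using cancel by auto
  then have "in_sub (assoc e) c"
    using cancel in_sub_append_right_iff in_sub_inv_word by fastforce
  then have "has_pinch ((t, e) # w)"
    unfolding has_pinch_def using w \<open>e' = (\<not> e)\<close> \<open>t \<notin> letters c\<close>
    by (intro exI[of _ "[]"] exI[of _ c] exI[of _ w'] exI[of _ e]) simp
  then show False
    using no_pinch by contradiction
qed

lemma stack_tracks_Cons_t:
  assumes "\<not> has_pinch ((t, e) # w)" and tracks: "stack_tracks w (h, L)"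
  shows "stack_tracks ((t, e) # w) (nf_act (t, e) (h, L))"
proof -
  let ?r = "coset_rep (assoc e) h"
  have "fst (hd ((e, ?r) # L)) = e' \<and>
      in_sub (assoc (\<not> e')) (inv_word c @ canon (transfer e (h @ inv_word ?r)))"
    if split: "(t, e) # w = c @ (t, e') # w'" "t \<notin> letters c" for c e' w'
  proof -
    have "c = []" and "e' = e"
      using split by (cases c; auto)+
    then show ?thesis
      using in_sub_transfer[OF in_sub_coset_rep] by simp
  qed
  then show ?thesis
    using tracks stack_tracks_no_cancel[OF assms]
    by (simp add: stack_tracks_def nf_act_def t_step_push)
qed

lemma stack_tracks_foldr_nf_act: "\<not> has_pinch w \<Longrightarrow> stack_tracks w (foldr nf_act w nf_base)"
proof (induction w)
  case Nil
  then show ?case by (simp add: stack_tracks_def nf_base_def)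
next
  case (Cons x w)
  obtain a b where x: "x = (a, b)" by fastforce
  have "stack_tracks w (foldr nf_act w nf_base)"
    using Cons has_pinch_Cons by blast
  then show ?case
    using Cons.prems x stack_tracks_Cons_letter stack_tracks_Cons_t
    by (cases "a = t"; cases "foldr nf_act w nf_base") simp_all
qed

theorem britton:
  assumes "word_eq hnn_relators w u" and "t \<notin> letters u" and "t \<in> letters w"
  shows "has_pinch w"
proof (rule ccontr)
  assume "\<not> has_pinch w"
  then have "length (snd (foldr nf_act w nf_base)) = t_count w"
    using stack_tracks_foldr_nf_act by (simp add: stack_tracks_def)
  moreover have "foldr nf_act w nf_base = foldr nf_act u nf_base"
    using foldr_nf_act_word_eq[OF assms(1) nf_valid_nf_base] .
  moreover have "snd (foldr nf_act u nf_base) = []"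
    using foldr_nf_act_t_free[OF assms(2) nf_valid_nf_base] by (simp add: nf_mult_def nf_base_def)
  ultimately show False
    using assms(3) by (simp add: letters_eq_set_map_fst count_list_0_iff)
qed

lemma hnn_word_eq_t_free:
  assumes "word_eq hnn_relators w u" and "t \<notin> letters w" and "t \<notin> letters u"
  shows "w \<approx> u"
proof -
  have "foldr nf_act w nf_base = foldr nf_act u nf_base"
    using foldr_nf_act_word_eq[OF assms(1) nf_valid_nf_base] .
  then have "nf_mult w nf_base = nf_mult u nf_base"
    using foldr_nf_act_t_free[OF assms(2) nf_valid_nf_base] foldr_nf_act_t_free[OF assms(3) nf_valid_nf_base]
    by simp
  then have "canon w = canon u"
    by (simp add: nf_mult_def nf_base_def one_def)
  then show ?thesis
    by (simp add: canon_eq_iff)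
qed

lemma hnn_conj_generator:
  assumes i: "i \<in> I"
  shows "word_eq hnn_relators [(t, e), (assoc e i, b), (t, \<not> e)] [(assoc (\<not> e) i, b)]"
proof -
  have \<alpha>\<beta>: "word_eq hnn_relators [(t, True), (\<alpha> i, False), (t, False)] [(\<beta> i, False)]"
  proof -
    let ?r = "[(t, True), (\<alpha> i, False), (t, False), (\<beta> i, True)]"
    have "?r \<in> hnn_relators"
      unfolding hnn_relators_def using i by blast
    have "word_eq hnn_relators [(t, True), (\<alpha> i, False), (t, False)] (?r @ [(\<beta> i, False)])"
      using word_eq_sym[OF word_eq_cancel[of _ "[(t, True), (\<alpha> i, False), (t, False)]" "\<beta> i" True "[]"]]
      by simp
    also have "word_eq hnn_relators \<dots> [(\<beta> i, False)]"
      using word_eq_relator[OF \<open>?r \<in> hnn_relators\<close>, of "[]"] by simp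
    finally show ?thesis .
  qed
  have "word_eq hnn_relators [(t, e), (assoc e i, False), (t, \<not> e)] [(assoc (\<not> e) i, False)]"
  proof (cases e)
    case False
    have "word_eq hnn_relators [(t, False), (\<beta> i, False), (t, True)]
        ([(t, False)] @ [(t, True), (\<alpha> i, False), (t, False)] @ [(t, True)])"
      using word_eq_cong[OF word_eq_sym[OF \<alpha>\<beta>], of "[(t, False)]" "[(t, True)]"] by simp
    also have "word_eq hnn_relators \<dots> [(\<alpha> i, False)]"
      using word_eq_cancel[of _ "[]" t False "[(\<alpha> i, False), (t, False), (t, True)]"]
        word_eq_cancel[of _ "[(\<alpha> i, False)]" t False "[]"]
      by (auto intro: word_eq_trans)
    finally show ?thesis using False by simp
  qed (use \<alpha>\<beta> in simp)
  then show ?thesis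
    using word_eq_inv_word by (cases b) force+
qed

lemma hnn_conj_rename:
  "letters W \<subseteq> I \<Longrightarrow>
    word_eq hnn_relators ((t, e) # rename (assoc e) W @ [(t, \<not> e)]) (rename (assoc (\<not> e)) W)"
proof (induction W)
  case Nil
  then show ?case using word_eq_cancel[of _ "[]" t e "[]"] by simp
next
  case (Cons x W)
  obtain i b where x: "x = (i, b)" by fastforce
  have "word_eq hnn_relators ((t, e) # rename (assoc e) (x # W) @ [(t, \<not> e)])
      ([(t, e), (assoc e i, b), (t, \<not> e)] @ ((t, e) # rename (assoc e) W @ [(t, \<not> e)]))"
    using word_eq_sym[OF word_eq_cancel[of _ "[(t, e), (assoc e i, b)]" t "\<not> e"]] x by simp
  also have "word_eq hnn_relators \<dots> ([(assoc (\<not> e) i, b)] @ rename (assoc (\<not> e)) W)"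
    using Cons x by (intro word_eq_append hnn_conj_generator) simp_all
  finally show ?case using x by simp
qed

lemma hnn_conj_in_sub:
  assumes "in_sub (assoc e) c"
  shows "word_eq hnn_relators ((t, e) # c @ [(t, \<not> e)]) (transfer e c)"
proof -
  obtain W where W: "letters W \<subseteq> I" "c \<approx> rename (assoc e) W"
    using assms unfolding in_sub_def by blast
  note mono = word_eq_mono[OF relators_subset_hnn_relators]
  have "word_eq hnn_relators ((t, e) # c @ [(t, \<not> e)]) ((t, e) # rename (assoc e) W @ [(t, \<not> e)])"
    using mono[OF word_eq_cong[OF W(2), of "[(t, e)]" "[(t, \<not> e)]"]] by simp
  also have "word_eq hnn_relators \<dots> (rename (assoc (\<not> e)) W)"
    by (rule hnn_conj_rename[OF W(1)])
  also have "word_eq hnn_relators \<dots> (transfer e c)"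
    using mono[OF transfer_word_eq[OF word_eq_sym[OF W(2)], of e]] W(1)
    by (simp add: transfer_rename_assoc)
  finally show ?thesis .
qed

lemma hnn_shortening:
  "letters w \<subseteq> insert t S0 \<Longrightarrow> letters u \<subseteq> S0 \<Longrightarrow> word_eq hnn_relators w u \<Longrightarrow>
    \<exists>w'. letters w' \<subseteq> S0 \<and> length w' \<le> length w \<and> w' \<approx> u"
proof (induction "t_count w" arbitrary: w rule: less_induct)
  case less
  have "t \<notin> letters u"
    using less.prems(2) t_notin_S0 by blast
  show ?case
  proof (cases "t \<in> letters w")
    case False
    then show ?thesis
      using less.prems hnn_word_eq_t_free \<open>t \<notin> letters u\<close> by blast
  next
    case True
    then obtain p c q e where w: "w = p @ [(t, e)] @ c @ [(t, \<not> e)] @ q"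
      and "t \<notin> letters c" and c: "in_sub (assoc e) c"
      using britton[OF less.prems(3) \<open>t \<notin> letters u\<close>] unfolding has_pinch_def by blast
    then have "letters c \<subseteq> S0"
      using less.prems(1) by auto
    let ?w' = "p @ transfer e c @ q"
    have "word_eq hnn_relators ?w' w"
      using word_eq_sym[OF word_eq_cong[OF hnn_conj_in_sub[OF c], of p q]] w by simp
    then have "word_eq hnn_relators ?w' u"
      using less.prems(3) by (rule word_eq_trans)
    moreover have "letters ?w' \<subseteq> insert t S0" and "length ?w' \<le> length w"
      using transfer_S0[OF \<open>letters c \<subseteq> S0\<close>, of e] less.prems(1) w by auto
    moreover have "t_count (transfer e c) = 0"
      using transfer_S0(1)[OF \<open>letters c \<subseteq> S0\<close>, of e] t_notin_S0
      by (auto simp: letters_eq_set_map_fst count_list_0_iff)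
    then have "t_count ?w' < t_count w"
      using w by simp
    ultimately obtain w' where "letters w' \<subseteq> S0" "length w' \<le> length ?w'" "w' \<approx> u"
      using less.hyps less.prems(2) by blast
    then show ?thesis
      using \<open>length ?w' \<le> length w\<close> by (intro exI[of _ w']) simp
  qed
qed

theorem hnn_word_dist:
  assumes "letters u \<subseteq> S0" and "letters v \<subseteq> S0"
  shows "word_dist S0 R0 u v = word_dist (insert t S0) hnn_relators u v"
  unfolding word_dist_def
proof (rule Least_eq_if_mutually_bounded)
  show "\<exists>w. letters w \<subseteq> S0 \<and> length w = length (inv_word u @ v) \<and> w \<approx> inv_word u @ v"
    using assms by (intro exI[of _ "inv_word u @ v"]) simp
next
  fix n
  assume "\<exists>w. letters w \<subseteq> S0 \<and> length w = n \<and> w \<approx> inv_word u @ v"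
  then show "\<exists>w. letters w \<subseteq> insert t S0 \<and> length w = n \<and> word_eq hnn_relators w (inv_word u @ v)"
    using word_eq_mono[OF relators_subset_hnn_relators] by blast
next
  fix n
  assume "\<exists>w. letters w \<subseteq> insert t S0 \<and> length w = n \<and> word_eq hnn_relators w (inv_word u @ v)"
  then show "\<exists>m\<le>n. \<exists>w. letters w \<subseteq> S0 \<and> length w = m \<and> w \<approx> inv_word u @ v"
  proof (elim exE conjE)
    fix w assume "letters w \<subseteq> insert t S0" "length w = n" "word_eq hnn_relators w (inv_word u @ v)"
    then obtain w' where "letters w' \<subseteq> S0" "length w' \<le> n" "w' \<approx> inv_word u @ v"
      using hnn_shortening[of w "inv_word u @ v"] assms by auto
    then show ?thesis by blast
  qed
qed

end

section \<open>The groups G_m as HNN extensions\<close>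

lemma Sg_notin_gens0: "Sg j \<notin> gens0 T p"
  by (auto simp: gens0_def)

lemma gensG_Suc: "1 \<le> n \<Longrightarrow> gensG T p (Suc n) = insert (Sg (Suc n)) (gensG T p n)"
  by (cases n) auto

lemma Sg_in_gensG_iff: "1 \<le> n \<Longrightarrow> Sg j \<in> gensG T p n \<longleftrightarrow> 1 \<le> j \<and> j \<le> n"
proof (induction n rule: nat_induct_at_least)
  case base
  then show ?case by (auto simp: Sg_notin_gens0)
next
  case (Suc n)
  then show ?case by (auto simp: gensG_Suc)
qed

lemma rename_Tg: "map (\<lambda>(x, e). (Tg x, e)) r = rename Tg r"
  by (simp add: rename_def apfst_def map_prod_def)

lemma letters_comm [simp]: "letters (comm a b) = {a, b}"
  by (auto simp: comm_def pos_def ngt_def)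

lemma subst_comm: "subst f (comm a b) = f a @ f b @ inv_word (f a) @ inv_word (f b)"
  by (simp add: comm_def pos_def ngt_def)

lemma relsG_Sg: "1 \<le> n \<Longrightarrow> r \<in> relsG T RH p d n \<Longrightarrow> Sg j \<in> letters r \<Longrightarrow> j \<le> n"
proof (induction n arbitrary: r rule: nat_induct_at_least)
  case base
  then show ?case
    by (auto simp: rels1_def rename_Tg letters_rename pos_def ngt_def Sg_notin_gens0)
next
  case (Suc n)
  then obtain k where "n = Suc k" by (cases n) auto
  then have "r \<in> relsG T RH p d n \<or> (\<forall>j'. Sg j' \<in> letters r \<longrightarrow> j' \<le> Suc n)"
    using Suc.prems(1) by (cases k) (auto simp: pos_def ngt_def)
  then show ?case
    using Suc.IH Suc.prems(2) by fastforce
qed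

fun \<rho>_ab :: "'t gen \<Rightarrow> nat word" where
  "\<rho>_ab (Zg i) = [(i, False)]"
| "\<rho>_ab (Ag i) = [(i, False)]"
| "\<rho>_ab (Bg i) = [(i, False)]"
| "\<rho>_ab _ = []"

lemma \<rho>_ab_relators: "r \<in> rels1 T RH p d \<Longrightarrow> word_eq {} (subst \<rho>_ab r) []"
proof -
  have "word_eq {} (subst \<rho>_ab (comm a b)) []" if "\<rho>_ab a = [] \<or> \<rho>_ab b = []" for a b
    using that word_eq_append_inv_word[of "{}" "\<rho>_ab a"] word_eq_append_inv_word[of "{}" "\<rho>_ab b"]
    by (auto simp: subst_comm)
  moreover have "word_eq {} (subst \<rho>_ab (comm (Sg 1) g)) []" for g
    using word_eq_append_inv_word[of "{}" "\<rho>_ab g"] by (simp add: subst_comm)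
  ultimately show "r \<in> rels1 T RH p d \<Longrightarrow> word_eq {} (subst \<rho>_ab r) []"
    by (auto simp: rels1_def rename_Tg pos_def ngt_def subst_rename_eq_Nil)
qed

lemma hnn_retraction_G2: "hnn_retraction (relsG T RH p d 1) (gensG T p 1) (Sg 2) {..<p} Ag Bg \<rho>_ab"
  using \<rho>_ab_relators Sg_in_gensG_iff[of 1 2 T p] relsG_Sg[of 1 _ T RH p d 2]
  by unfold_locales (auto simp: gens0_def)

lemma hnn_relators_G2:
  "hnn_retraction.hnn_relators (relsG T RH p d 1) (Sg 2) {..<p} Ag Bg = relsG T RH p d 2"
  unfolding hnn_retraction.hnn_relators_def[OF hnn_retraction_G2]
  by (simp add: numeral_2_eq_2 pos_def ngt_def)

fun \<rho>_s :: "'t gen \<Rightarrow> nat word" where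
  "\<rho>_s (Sg j) = [(0, False)]"
| "\<rho>_s _ = []"

lemma \<rho>_s_relators: "1 \<le> n \<Longrightarrow> r \<in> relsG T RH p d n \<Longrightarrow> word_eq {} (subst \<rho>_s r) []"
proof (induction n arbitrary: r rule: nat_induct_at_least)
  case base
  have "\<rho>_s g = []" if "g \<in> gens0 T p" for g
    using that by (auto simp: gens0_def)
  then show ?case
    using base by (auto simp: rels1_def rename_Tg subst_comm pos_def ngt_def subst_rename_eq_Nil)
next
  case (Suc n)
  have "word_eq {} [(0::nat, True), (0, False), (0, False), (0, True)] []"
    using word_eq_cancel[of "{}" "[]" "0::nat" True "[(0, False), (0, True)]"]
      word_eq_cancel[of "{}" "[]" "0::nat" False "[]"]
    by (auto intro: word_eq_trans)
  moreover obtain k where "n = Suc k" using Suc.hyps by (cases n) auto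
  ultimately show ?case
    using Suc by (cases k) (auto simp: pos_def ngt_def)
qed

lemma hnn_retraction_Gm:
  "hnn_retraction (relsG T RH p d (Suc (Suc k))) (gensG T p (Suc (Suc k))) (Sg (Suc (Suc (Suc k))))
     {0} (\<lambda>_. Sg 1) (\<lambda>_. Sg (Suc (Suc k))) \<rho>_s"
proof unfold_locales
  let ?n = "Suc (Suc k)"
  show "Sg (Suc ?n) \<notin> gensG T p ?n"
    using Sg_in_gensG_iff[of ?n "Suc ?n" T p] by simp
  show "\<forall>r\<in>relsG T RH p d ?n. Sg (Suc ?n) \<notin> letters r"
    using relsG_Sg[of ?n _ T RH p d "Suc ?n"] by force
  show "\<forall>i\<in>{0}. Sg 1 \<in> gensG T p ?n \<and> Sg ?n \<in> gensG T p ?n"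
    by (simp del: gensG.simps add: Sg_in_gensG_iff)
  show "\<forall>r\<in>relsG T RH p d ?n. word_eq {} (subst \<rho>_s r) []"
    by (intro ballI \<rho>_s_relators) simp_all
  show "\<forall>x\<in>gensG T p ?n. length (\<rho>_s x) \<le> 1 \<and> letters (\<rho>_s x) \<subseteq> {0}"
  proof
    fix x :: "'t gen"
    show "length (\<rho>_s x) \<le> 1 \<and> letters (\<rho>_s x) \<subseteq> {0}" by (cases x) auto
  qed
qed simp_all

lemma hnn_relators_Gm:
  "hnn_retraction.hnn_relators (relsG T RH p d (Suc (Suc k))) (Sg (Suc (Suc (Suc k)))) {0::nat}
     (\<lambda>_. Sg 1) (\<lambda>_. Sg (Suc (Suc k))) = relsG T RH p d (Suc (Suc (Suc k)))"
  unfolding hnn_retraction.hnn_relators_def[OF hnn_retraction_Gm] by (simp add: pos_def ngt_def)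

lemma word_dist_gensG_Suc:
  assumes "1 \<le> n" and u: "letters u \<subseteq> gensG T p n" and v: "letters v \<subseteq> gensG T p n"
  shows "word_dist (gensG T p n) (relsG T RH p d n) u v
       = word_dist (gensG T p (Suc n)) (relsG T RH p d (Suc n)) u v"
proof -
  have "word_dist (gensG T p n) (relsG T RH p d n) u v
      = word_dist (insert (Sg (Suc n)) (gensG T p n)) (relsG T RH p d (Suc n)) u v"
  proof (cases "n = 1")
    case True
    show ?thesis
      using hnn_retraction.hnn_word_dist[OF hnn_retraction_G2[of T RH p d] u[unfolded True] v[unfolded True]]
      unfolding hnn_relators_G2 True by (simp add: numeral_2_eq_2)
  next
    case False
    with \<open>1 \<le> n\<close> obtain k where n: "n = Suc (Suc k)"
      using le_Suc_ex[of 2 n] by auto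
    show ?thesis
      using hnn_retraction.hnn_word_dist[OF hnn_retraction_Gm[of T RH p d] u[unfolded n] v[unfolded n]]
      unfolding hnn_relators_Gm n .
  qed
  then show ?thesis
    using \<open>1 \<le> n\<close> by (simp add: gensG_Suc)
qed

theorem lemma3p3:
  fixes T :: "'t set" and RH :: "'t word set" and p :: nat and d :: "nat \<Rightarrow> 't"
    and m :: nat and u v :: "'t gen word"
  assumes "finite T" and "finite RH" and "\<forall>r\<in>RH. letters r \<subseteq> T"
    and "\<forall>i<p. d i \<in> T" and "free_basis RH p d"
    and "2 \<le> m"
    and "letters u \<subseteq> gensG T p (m - 1)" and "letters v \<subseteq> gensG T p (m - 1)"
  shows "word_dist (gensG T p (m - 1)) (relsG T RH p d (m - 1)) u v
       = word_dist (gensG T p m) (relsG T RH p d m) u v"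
proof -
  obtain n where "m = Suc n" and "1 \<le> n"
    using \<open>2 \<le> m\<close> by (cases m) auto
  then show ?thesis
    using word_dist_gensG_Suc assms(7,8) by simp
qed

end
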